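(* In the setting described in the context, assume (F1) and (F2), that $\alpha\le\frac{2}{L+\beta}$, that $\rho:=\sigma_W(1+\alpha L\delta)<1$, and that there exists $R>0$ with $\|\bar w(t)-w_*\|\le R$ for all $t\ge0$. Let $\mathbf D_1=\delta\|1_n-n\pi\|_\pi+\sqrt{\sum_{j=1}^n 1/\pi_j}$, $\mathbf D_2=L\delta\|1_n-n\pi\|_\pi\|w_*\|+\|\nabla F(1_n\otimes w_* )\|_{\pi\otimes1_d}$, and $\bar R=L\mathbf D_1R+\mathbf D_2$. Then for all $t\ge0$, $$\|w(t)-n\pi\otimes\bar w(t)\|_{\pi\otimes1_d}\le\rho^t\|w(0)-n\pi\otimes\bar w(0)\|_{\pi\otimes1_d}+\frac{\alpha\sigma_W\bar R}{1-\rho}$$ and $$\begin{aligned}\|\bar w(t)-w_*\|&\le(1-\gamma\alpha)^t\|\bar w(0)-w_*\|+\frac{\alpha L\delta}{n}\|w(0)-n\pi\otimes\bar w(0)\|_{\pi\otimes1_d}\,t\,[\max\{1-\gamma\alpha,\rho\}]^{t-1}\\&\quad+\frac{\alpha L\delta}{n}\|1_n-n\pi\|_\pi(\|w_*\|+R)\,t\,[\max\{1-\gamma\alpha,\sigma_W\}]^{t-1}+\frac{\alpha L\delta}{n\gamma}\frac{\sigma_W\bar R}{1-\rho}.\end{aligned}$$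
   Context: Graph and weights: $G=(V,E)$ directed, $V=\{1,\dots,n\}$, $(i,i)\in E$ for all $i$, and $G$ strongly connected. Let $d_j=|\{i:(j,i)\in E\}|$ and $W_{ij}=1/d_j$ if $(j,i)\in E$, $W_{ij}=0$ otherwise. Let $\pi\in\mathbb R^n$ be the vector with $W\pi=\pi$, $\pi_i>0$, $\sum_i\pi_i=1$, and $W^\infty=\pi 1_n^\top$. For $x\in\mathbb R^n$, $\|x\|_\pi=(\sum_i x_i^2/\pi_i)^{1/2}$, $|||A|||_\pi$ is the induced operator norm, and $\sigma_W:=|||W-W^\infty|||_\pi$ (known to satisfy $\sigma_W<1$). For $x=\mathrm{col}(x_1,\dots,x_n)\in\mathbb R^{nd}$, $\|x\|_{\pi\otimes1_d}=(\sum_i\|x_i\|^2/\pi_i)^{1/2}$; $\|\cdot\|$ is Euclidean. For $v\in\mathbb R^n$, $u\in\mathbb R^d$, $v\otimes u=\mathrm{col}(v_1u,\dots,v_nu)$. Costs: $f_i:\mathbb R^d\to\mathbb R$, $f=\frac1n\sum_i f_i$. (F1): each $\nabla f_i$ is Lipschitz with constant $L_i>0$; $L:=\max_iL_i$. (F2): $f$ is $\beta$-strongly convex, $\beta>0$. $w_*$ is the unique minimizer of $f$; $\gamma=\frac{\beta L}{\beta+L}$; $\nabla F(x)=\mathrm{col}(\nabla f_1(x_1),\dots,\nabla f_n(x_n))$. Gradient-push algorithm with stepsize $\alpha>0$: given $w(0)\in\mathbb R^{nd}$ and $y(0)=1_n$, for $t\ge0$: $z_i(t)=w_i(t)/y_i(t)$,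 $x_i(t)=w_i(t)-\alpha\nabla f_i(z_i(t))$, $w_i(t+1)=\sum_jW_{ij}x_j(t)$, $y_i(t+1)=\sum_jW_{ij}y_j(t)$. $\bar w(t)=\frac1n\sum_iw_i(t)$. $\delta:=\sup_{t\ge0}\max_i1/y_i(t)$ (finite). *)

theory Defs
  imports "HOL-Analysis.Analysis"
begin

text \<open>Nodes are indexed by 0..<n (the paper uses 1..n). Vectors in R^n are functions
  nat => real, block vectors in R^(nd) are functions nat => 'a with 'a a Euclidean space.\<close>

definition out_deg :: "(nat \<times> nat) set \<Rightarrow> nat \<Rightarrow> nat" where
  "out_deg E j = card {i. (j, i) \<in> E}"

definition weight_mat :: "(nat \<times> nat) set \<Rightarrow> nat \<Rightarrow> nat \<Rightarrow> real" where
  "weight_mat E i j = (if (j, i) \<in> E then 1 / real (out_deg E j) else 0)"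

definition mat_vec :: "nat \<Rightarrow> (nat \<Rightarrow> nat \<Rightarrow> real) \<Rightarrow> (nat \<Rightarrow> real) \<Rightarrow> nat \<Rightarrow> real" where
  "mat_vec n A x = (\<lambda>i. \<Sum>j<n. A i j * x j)"

definition pi_norm :: "nat \<Rightarrow> (nat \<Rightarrow> real) \<Rightarrow> (nat \<Rightarrow> real) \<Rightarrow> real" where
  "pi_norm n p x = sqrt (\<Sum>i<n. (x i)\<^sup>2 / p i)"

definition pi_op_norm :: "nat \<Rightarrow> (nat \<Rightarrow> real) \<Rightarrow> (nat \<Rightarrow> nat \<Rightarrow> real) \<Rightarrow> real" where
  "pi_op_norm n p A = Sup {pi_norm n p (mat_vec n A x) | x. pi_norm n p x \<le> 1}"

definition pi_block_norm :: "nat \<Rightarrow> (nat \<Rightarrow> real) \<Rightarrow> (nat \<Rightarrow> 'a::euclidean_space) \<Rightarrow> real" where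
  "pi_block_norm n p x = sqrt (\<Sum>i<n. (norm (x i))\<^sup>2 / p i)"

definition strongly_convex :: "real \<Rightarrow> ('a::real_normed_vector \<Rightarrow> real) \<Rightarrow> bool" where
  "strongly_convex \<beta> h \<longleftrightarrow> (\<forall>x y. \<forall>s::real. 0 \<le> s \<and> s \<le> 1 \<longrightarrow>
     h (s *\<^sub>R x + (1 - s) *\<^sub>R y) \<le> s * h x + (1 - s) * h y - \<beta> / 2 * s * (1 - s) * (norm (x - y))\<^sup>2)"

end

(* Write z_j(t) = w_j(t) / y_j(t) and e(t) = |w(t) - n pi (x) wbar(t)|_pi.  Since W pi = pi and
   1^T pi = 1, both y and w mix through W - pi 1^T, whose norm is sigma_W < 1: y(t) - n pi decays
   like sigma_W^t, and e(t+1) <= sigma_W (e(t) + alpha |grad F(z(t))|).  Strong connectivity with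
   self-loops keeps the weights y bounded below, so delta is finite and
   |z_j - wbar| <= delta (|w_j - n pi_j wbar| + |y_j - n pi_j| |wbar|); with Lipschitz gradients
   and |wbar - w*| <= R this gives |grad F(z(t))| <= L delta e(t) + Rbar, hence
   e(t+1) <= rho e(t) + alpha sigma_W Rbar.  The average moves by
   wbar(t+1) = wbar(t) - (alpha/n) sum_j grad f_j(z_j(t)): an exact gradient step on f, which
   contracts by 1 - gamma alpha when alpha <= 2/(L + beta) (Nesterov's co-coercivity bound), plus
   an error of size (alpha L delta/n) (e(t) + sigma_W^t |1 - n pi|_pi (|w*| + R)).  Unrolling the
   two coupled linear recursions yields both estimates. *)

theory Submission
  imports Defs
begin

section \<open>Weighted norms\<close>

locale pos_weights =
  fixes n :: nat and p :: "nat \<Rightarrow> real"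
  assumes weights_pos: "\<forall>i<n. p i > 0"
begin

lemma pi_norm_eq_L2_set: "pi_norm n p x = L2_set (\<lambda>i. x i / sqrt (p i)) {..<n}"
  unfolding pi_norm_def L2_set_def
  using weights_pos by (intro arg_cong[where f = sqrt] sum.cong) (auto simp: power_divide)

lemma pi_norm_nonneg: "0 \<le> pi_norm n p x"
  by (simp add: pi_norm_eq_L2_set)

lemma pi_norm_triangle: "pi_norm n p (\<lambda>i. x i + z i) \<le> pi_norm n p x + pi_norm n p z"
  unfolding pi_norm_eq_L2_set by (simp add: add_divide_distrib L2_set_triangle_ineq)

lemma pi_norm_scale: "pi_norm n p (\<lambda>i. c * x i) = \<bar>c\<bar> * pi_norm n p x"
proof -
  have "pi_norm n p (\<lambda>i. c * x i) = sqrt (c\<^sup>2 * (\<Sum>i<n. (x i)\<^sup>2 / p i))"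
    unfolding pi_norm_def by (simp add: sum_distrib_left power_mult_distrib)
  then show ?thesis
    unfolding pi_norm_def by (simp add: real_sqrt_mult)
qed

lemma pi_norm_mono:
  assumes "\<forall>i<n. \<bar>x i\<bar> \<le> z i"
  shows "pi_norm n p x \<le> pi_norm n p z"
  unfolding pi_norm_def
proof (intro real_sqrt_le_mono sum_mono)
  fix i assume "i \<in> {..<n}"
  then have "\<bar>x i\<bar> \<le> z i" "0 < p i"
    using assms weights_pos by auto
  moreover from \<open>\<bar>x i\<bar> \<le> z i\<close> have "\<bar>x i\<bar>\<^sup>2 \<le> (z i)\<^sup>2"
    by (intro power_mono) auto
  ultimately show "(x i)\<^sup>2 / p i \<le> (z i)\<^sup>2 / p i"
    by (simp add: divide_right_mono)
qed

lemma pi_norm_cong: "\<forall>i<n. x i = z i \<Longrightarrow> pi_norm n p x = pi_norm n p z"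
  unfolding pi_norm_def by (intro arg_cong[where f = sqrt] sum.cong) auto

lemma pi_norm_abs: "pi_norm n p (\<lambda>i. \<bar>x i\<bar>) = pi_norm n p x"
  unfolding pi_norm_def by simp

lemma pi_norm_const_one: "pi_norm n p (\<lambda>i. 1) = sqrt (\<Sum>j<n. 1 / p j)"
  unfolding pi_norm_def by simp

lemma pi_norm_sq: "(pi_norm n p x)\<^sup>2 = (\<Sum>i<n. (x i)\<^sup>2 / p i)"
  unfolding pi_norm_def using weights_pos by (intro real_sqrt_pow2 sum_nonneg) auto

lemma pi_block_norm_eq_pi_norm: "pi_block_norm n p x = pi_norm n p (\<lambda>i. norm (x i))"
  unfolding pi_block_norm_def pi_norm_def by simp

lemma pi_block_norm_nonneg: "0 \<le> pi_block_norm n p x"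
  by (simp add: pi_block_norm_eq_pi_norm pi_norm_nonneg)

lemma pi_block_norm_triangle:
  "pi_block_norm n p (\<lambda>i. x i + z i) \<le> pi_block_norm n p x + pi_block_norm n p z"
  unfolding pi_block_norm_eq_pi_norm
  using pi_norm_mono[of "\<lambda>i. norm (x i + z i)" "\<lambda>i. norm (x i) + norm (z i)"]
    pi_norm_triangle[of "\<lambda>i. norm (x i)" "\<lambda>i. norm (z i)"]
  by (simp add: norm_triangle_ineq)

lemma pi_block_norm_scaleR: "pi_block_norm n p (\<lambda>i. c *\<^sub>R x i) = \<bar>c\<bar> * pi_block_norm n p x"
  unfolding pi_block_norm_eq_pi_norm by (simp add: pi_norm_scale)

lemma pi_block_norm_sq:
  "(pi_block_norm n p x)\<^sup>2 = (\<Sum>b\<in>Basis. (pi_norm n p (\<lambda>i. x i \<bullet> b))\<^sup>2)"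
proof -
  have norm_sq: "(norm (x i))\<^sup>2 = (\<Sum>b\<in>Basis. (x i \<bullet> b)\<^sup>2)" for i
    by (subst power2_norm_eq_inner, subst euclidean_inner) (simp add: power2_eq_square)
  have "(pi_block_norm n p x)\<^sup>2 = (\<Sum>i<n. (norm (x i))\<^sup>2 / p i)"
    by (simp add: pi_block_norm_eq_pi_norm pi_norm_sq)
  also have "\<dots> = (\<Sum>i<n. \<Sum>b\<in>Basis. (x i \<bullet> b)\<^sup>2 / p i)"
    by (simp add: norm_sq sum_divide_distrib)
  also have "\<dots> = (\<Sum>b\<in>Basis. (pi_norm n p (\<lambda>i. x i \<bullet> b))\<^sup>2)"
    by (simp add: pi_norm_sq sum.swap[of _ "{..<n}"])
  finally show ?thesis .
qed

end

locale prob_weights = pos_weights +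
  assumes weights_sum: "(\<Sum>i<n. p i) = 1"
begin

lemma sum_abs_le_pi_norm: "(\<Sum>i<n. \<bar>x i\<bar>) \<le> pi_norm n p x"
proof -
  have "(\<Sum>i<n. \<bar>x i\<bar>) = (\<Sum>i<n. \<bar>x i / sqrt (p i)\<bar> * \<bar>sqrt (p i)\<bar>)"
    using weights_pos by (intro sum.cong) (auto simp: abs_mult abs_divide)
  also have "\<dots> \<le> L2_set (\<lambda>i. x i / sqrt (p i)) {..<n} * L2_set (\<lambda>i. sqrt (p i)) {..<n}"
    by (rule L2_set_mult_ineq)
  also have "L2_set (\<lambda>i. sqrt (p i)) {..<n} = 1"
    unfolding L2_set_def using weights_pos weights_sum by (simp add: less_imp_le)
  finally show ?thesis
    by (simp add: pi_norm_eq_L2_set)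
qed

lemma abs_le_pi_norm: "k < n \<Longrightarrow> \<bar>x k\<bar> \<le> pi_norm n p x"
  using member_le_sum[of k "{..<n}" "\<lambda>i. \<bar>x i\<bar>"] sum_abs_le_pi_norm[of x] by simp

lemma bdd_above_pi_op_norm:
  "bdd_above {pi_norm n p (mat_vec n A x) | x. pi_norm n p x \<le> 1}"
proof (rule bdd_aboveI)
  fix r assume "r \<in> {pi_norm n p (mat_vec n A x) | x. pi_norm n p x \<le> 1}"
  then obtain x where r: "r = pi_norm n p (mat_vec n A x)" and x: "pi_norm n p x \<le> 1"
    by auto
  have "\<bar>mat_vec n A x i\<bar> \<le> (\<Sum>j<n. \<bar>A i j\<bar>)" for i
  proof -
    have "\<bar>mat_vec n A x i\<bar> \<le> (\<Sum>j<n. \<bar>A i j\<bar> * \<bar>x j\<bar>)"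
      unfolding mat_vec_def abs_mult[symmetric] by (rule sum_abs)
    also have "\<dots> \<le> (\<Sum>j<n. \<bar>A i j\<bar> * 1)"
      using abs_le_pi_norm[of _ x] x
      by (intro sum_mono mult_left_mono) (auto intro: order_trans)
    finally show ?thesis
      by simp
  qed
  then show "r \<le> pi_norm n p (\<lambda>i. \<Sum>j<n. \<bar>A i j\<bar>)"
    unfolding r by (intro pi_norm_mono) auto
qed

lemma pi_op_norm_nonneg: "0 \<le> pi_op_norm n p A"
proof -
  have "pi_norm n p (mat_vec n A (\<lambda>i. 0)) \<le> pi_op_norm n p A"
    unfolding pi_op_norm_def
    by (rule cSup_upper[OF _ bdd_above_pi_op_norm]) (auto simp: pi_norm_def)
  then show ?thesis
    using pi_norm_nonneg order_trans by blast
qed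

lemma pi_norm_mat_vec_le: "pi_norm n p (mat_vec n A x) \<le> pi_op_norm n p A * pi_norm n p x"
proof (cases "pi_norm n p x = 0")
  case True
  then have "\<forall>j<n. x j = 0"
    using abs_le_pi_norm[of _ x] by fastforce
  then have "pi_norm n p (mat_vec n A x) = 0"
    by (simp add: mat_vec_def pi_norm_def)
  then show ?thesis
    using True by simp
next
  case False
  define N where "N = pi_norm n p x"
  have N: "N > 0"
    using False pi_norm_nonneg unfolding N_def by (simp add: order_less_le)
  have "pi_norm n p (\<lambda>i. (1 / N) * x i) = 1"
    using N unfolding pi_norm_scale by (simp add: N_def)
  then have "pi_norm n p (mat_vec n A (\<lambda>i. (1 / N) * x i)) \<le> pi_op_norm n p A"
    unfolding pi_op_norm_def by (intro cSup_upper[OF _ bdd_above_pi_op_norm]) auto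
  moreover have "mat_vec n A (\<lambda>i. (1 / N) * x i) = (\<lambda>i. (1 / N) * mat_vec n A x i)"
    by (simp add: mat_vec_def sum_distrib_left algebra_simps)
  with N have "pi_norm n p (mat_vec n A (\<lambda>i. (1 / N) * x i)) = (1 / N) * pi_norm n p (mat_vec n A x)"
    by (simp only: pi_norm_scale) simp
  ultimately have "(1 / N) * pi_norm n p (mat_vec n A x) \<le> pi_op_norm n p A"
    by simp
  then show ?thesis
    using N by (simp add: N_def field_simps)
qed

text \<open>\<open>A \<otimes> I\<^sub>d\<close> acts on each coordinate of the blocks as \<open>A\<close> acts on \<open>\<real>\<^sup>n\<close>.\<close>
lemma pi_block_norm_mat_le:
  "pi_block_norm n p (\<lambda>i. \<Sum>j<n. A i j *\<^sub>R x j) \<le> pi_op_norm n p A * pi_block_norm n p x"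
proof (rule power2_le_imp_le)
  let ?s = "pi_op_norm n p A"
  have "(pi_block_norm n p (\<lambda>i. \<Sum>j<n. A i j *\<^sub>R x j))\<^sup>2
      = (\<Sum>b\<in>Basis. (pi_norm n p (mat_vec n A (\<lambda>j. x j \<bullet> b)))\<^sup>2)"
    by (simp add: pi_block_norm_sq mat_vec_def inner_sum_left)
  also have "\<dots> \<le> (\<Sum>b\<in>Basis. (?s * pi_norm n p (\<lambda>j. x j \<bullet> b))\<^sup>2)"
    by (intro sum_mono power_mono pi_norm_mat_vec_le pi_norm_nonneg)
  also have "\<dots> = (?s * pi_block_norm n p x)\<^sup>2"
    by (simp add: pi_block_norm_sq power_mult_distrib sum_distrib_left)
  finally show "(pi_block_norm n p (\<lambda>i. \<Sum>j<n. A i j *\<^sub>R x j))\<^sup>2 \<le> (?s * pi_block_norm n p x)\<^sup>2" .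
  show "0 \<le> ?s * pi_block_norm n p x"
    by (simp add: pi_op_norm_nonneg pi_block_norm_nonneg)
qed

text \<open>The identity \<open>(A - \<pi> 1\<^sup>T)(x - \<pi> \<otimes> u) = A x - \<pi> \<otimes> \<Sum>x\<close> behind all consensus
  estimates: the shift \<open>\<pi> \<otimes> u\<close> is annihilated because \<open>A \<pi> = \<pi>\<close> and \<open>1\<^sup>T \<pi> = 1\<close>.\<close>
lemma centered_mix_eq:
  fixes x :: "nat \<Rightarrow> 'a::real_vector"
  assumes stationary: "(\<Sum>j<n. A i j * p j) = p i"
  shows "(\<Sum>j<n. (A i j - p i) *\<^sub>R (x j - p j *\<^sub>R u)) = (\<Sum>j<n. A i j *\<^sub>R x j) - p i *\<^sub>R (\<Sum>j<n. x j)"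
proof -
  have "(\<Sum>j<n. (A i j - p i) * p j) = 0"
    using stationary weights_sum by (simp add: left_diff_distrib sum_subtractf flip: sum_distrib_left)
  then have "(\<Sum>j<n. ((A i j - p i) * p j) *\<^sub>R u) = 0"
    by (simp flip: scaleR_left.sum)
  then show ?thesis
    by (simp add: scaleR_diff_right scaleR_diff_left sum_subtractf scaleR_sum_right)
qed

end

section \<open>Smooth strongly convex functions\<close>

lemma has_real_derivative_along_line:
  fixes F :: "'a::euclidean_space \<Rightarrow> real"
  assumes grad: "\<And>x. GDERIV F x :> G x"
  shows "((\<lambda>s. F (x + s *\<^sub>R v)) has_real_derivative (v \<bullet> G (x + s *\<^sub>R v))) (at s)"
proof -
  have "((\<lambda>s. x + s *\<^sub>R v) has_derivative (\<lambda>t. t *\<^sub>R v)) (at s)"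
    by (auto intro!: derivative_eq_intros)
  from has_derivative_compose[OF this grad[unfolded gderiv_def]]
  have "((\<lambda>s. F (x + s *\<^sub>R v)) has_derivative (\<lambda>t. (t *\<^sub>R v) \<bullet> G (x + s *\<^sub>R v))) (at s)"
    by (simp add: o_def)
  then show ?thesis
    by (simp add: has_field_derivative_def mult_commute_abs)
qed

lemma lipschitz_gradient_upper_bound:
  fixes F :: "'a::euclidean_space \<Rightarrow> real"
  assumes grad: "\<And>x. GDERIV F x :> G x"
    and lip: "L-lipschitz_on UNIV G"
  shows "F y \<le> F x + G x \<bullet> (y - x) + L / 2 * (norm (y - x))\<^sup>2"
proof -
  define v where "v = y - x"
  define \<psi> where "\<psi> s = F (x + s *\<^sub>R v) - s * (v \<bullet> G x) - L / 2 * s\<^sup>2 * (norm v)\<^sup>2" for s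
  have "\<psi> 1 \<le> \<psi> 0"
  proof (rule DERIV_nonpos_imp_nonincreasing[of 0 1 \<psi>])
    fix s :: real assume s: "0 \<le> s" "s \<le> 1"
    have d: "(\<psi> has_real_derivative (v \<bullet> G (x + s *\<^sub>R v) - v \<bullet> G x - L * s * (norm v)\<^sup>2)) (at s)"
      unfolding \<psi>_def
      by (rule has_real_derivative_along_line[OF grad] derivative_eq_intros refl | simp)+
    have "v \<bullet> G (x + s *\<^sub>R v) - v \<bullet> G x = v \<bullet> (G (x + s *\<^sub>R v) - G x)"
      by (simp add: inner_diff_right)
    also have "\<dots> \<le> norm v * norm (G (x + s *\<^sub>R v) - G x)"
      by (metis Cauchy_Schwarz_ineq2 abs_le_iff)
    also have "\<dots> \<le> norm v * (L * norm (s *\<^sub>R v))"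
      using lipschitz_on_normD[OF lip, of "x + s *\<^sub>R v" x] by (intro mult_left_mono) auto
    also have "\<dots> = L * s * (norm v)\<^sup>2"
      using s by (simp add: power2_eq_square)
    finally show "\<exists>y. (\<psi> has_real_derivative y) (at s) \<and> y \<le> 0"
      using d by auto
  qed simp
  then show ?thesis
    unfolding \<psi>_def v_def by (simp add: inner_commute)
qed

lemma strongly_convex_lower_bound:
  fixes F :: "'a::euclidean_space \<Rightarrow> real"
  assumes grad: "\<And>x. GDERIV F x :> G x"
    and sc: "strongly_convex \<beta> F"
  shows "F x + G x \<bullet> (y - x) + \<beta> / 2 * (norm (y - x))\<^sup>2 \<le> F y"
proof -
  define v where "v = y - x"
  define q where "q s = (F (x + s *\<^sub>R v) - F x) / s" for s
  have "q s \<le> F y - F x - \<beta> / 2 * (1 - s) * (norm v)\<^sup>2" if s: "0 < s" "s \<le> 1" for s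
  proof -
    have "F (s *\<^sub>R y + (1 - s) *\<^sub>R x) \<le> s * F y + (1 - s) * F x - \<beta> / 2 * s * (1 - s) * (norm v)\<^sup>2"
      using sc s unfolding strongly_convex_def v_def by auto
    moreover have "s *\<^sub>R y + (1 - s) *\<^sub>R x = x + s *\<^sub>R v"
      unfolding v_def by (simp add: algebra_simps)
    ultimately have "F (x + s *\<^sub>R v) - F x \<le> s * (F y - F x - \<beta> / 2 * (1 - s) * (norm v)\<^sup>2)"
      by (simp add: algebra_simps)
    then show ?thesis
      unfolding q_def using s by (simp add: divide_le_eq mult.commute)
  qed
  then have "eventually (\<lambda>s. q s \<le> F y - F x - \<beta> / 2 * (1 - s) * (norm v)\<^sup>2) (at_right 0)"
    unfolding eventually_at_right_field by (intro exI[of _ 1]) auto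
  moreover have "((\<lambda>s. F y - F x - \<beta> / 2 * (1 - s) * (norm v)\<^sup>2)
      \<longlongrightarrow> F y - F x - \<beta> / 2 * (1 - 0) * (norm v)\<^sup>2) (at_right 0)"
    by (intro tendsto_intros)
  moreover have "(q \<longlongrightarrow> v \<bullet> G x) (at_right 0)"
  proof -
    have "((\<lambda>s. F (x + s *\<^sub>R v)) has_real_derivative (v \<bullet> G x)) (at 0)"
      using has_real_derivative_along_line[OF grad, of x v 0] by simp
    then have "(q \<longlongrightarrow> v \<bullet> G x) (at 0)"
      unfolding has_field_derivative_iff q_def by simp
    then show ?thesis
      by (rule filterlim_mono) (auto simp: at_le)
  qed
  ultimately have "v \<bullet> G x \<le> F y - F x - \<beta> / 2 * (1 - 0) * (norm v)\<^sup>2"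
    by (intro tendsto_le[of "at_right 0"]) auto
  then show ?thesis
    unfolding v_def by (simp add: inner_commute)
qed

text \<open>The key inequality compares the quadratic upper bound at the gradient step
  \<open>b - (1/l) (D b - D a)\<close> from \<open>b\<close> with the convexity bound from \<open>a\<close>.\<close>
lemma gradient_cocoercive:
  fixes \<phi> :: "'a::euclidean_space \<Rightarrow> real"
  assumes lower: "\<And>x y. \<phi> x + D x \<bullet> (y - x) \<le> \<phi> y"
    and upper: "\<And>x y. \<phi> y \<le> \<phi> x + D x \<bullet> (y - x) + l / 2 * (norm (y - x))\<^sup>2"
    and l: "l > 0"
  shows "(norm (D x - D y))\<^sup>2 \<le> l * ((D x - D y) \<bullet> (x - y))"
proof -
  have key: "\<phi> a + D a \<bullet> (b - a) + 1 / (2 * l) * (norm (D b - D a))\<^sup>2 \<le> \<phi> b" for a b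
  proof -
    define z where "z = b - (1 / l) *\<^sub>R (D b - D a)"
    have "\<phi> a + D a \<bullet> (z - a) \<le> \<phi> z" "\<phi> z \<le> \<phi> b + D b \<bullet> (z - b) + l / 2 * (norm (z - b))\<^sup>2"
      using lower upper by auto
    moreover have "D a \<bullet> (z - a) = D a \<bullet> (b - a) - (1 / l) * (D a \<bullet> (D b - D a))"
      unfolding z_def by (simp add: inner_diff_right algebra_simps)
    moreover have "D b \<bullet> (z - b) = - (1 / l) * (D b \<bullet> (D b - D a))"
      unfolding z_def by (simp add: inner_diff_right algebra_simps)
    moreover have "l / 2 * (norm (z - b))\<^sup>2 = 1 / (2 * l) * (norm (D b - D a))\<^sup>2"
      unfolding z_def using l by (simp add: power2_eq_square)
    moreover have "(norm (D b - D a))\<^sup>2 = D b \<bullet> (D b - D a) - D a \<bullet> (D b - D a)"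
      by (simp add: power2_norm_eq_inner inner_diff_left)
    ultimately show ?thesis
      using l by (simp add: field_simps)
  qed
  have "(D x - D y) \<bullet> (x - y) = - (D x \<bullet> (y - x)) - D y \<bullet> (x - y)"
    by (simp add: inner_diff_left inner_diff_right algebra_simps)
  with key[of x y] key[of y x] have "1 / l * (norm (D x - D y))\<^sup>2 \<le> (D x - D y) \<bullet> (x - y)"
    by (simp add: norm_minus_commute)
  then show ?thesis
    using l by (simp add: field_simps)
qed

lemma strongly_convex_le_lipschitz:
  fixes F :: "'a::euclidean_space \<Rightarrow> real"
  assumes grad: "\<And>x. GDERIV F x :> G x"
    and sc: "strongly_convex \<beta> F"
    and lip: "L-lipschitz_on UNIV G"
  shows "\<beta> \<le> L"
proof -
  obtain b :: 'a where "norm b = 1"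
    using norm_Basis SOME_Basis by blast
  with strongly_convex_lower_bound[OF grad sc, of 0 b] lipschitz_gradient_upper_bound[OF grad lip, of b 0]
  show ?thesis
    by simp
qed

text \<open>Nesterov's bound (Theorem 2.1.12 of his Introductory Lectures).
  It is co-coercivity applied to \<open>F - \<beta>/2 \<parallel>x\<parallel>\<^sup>2\<close>, whose quadratic upper bound has constant
  \<open>L - \<beta>\<close>; since that constant may vanish, it is first enlarged by \<open>\<epsilon> > 0\<close>.\<close>
lemma strongly_convex_gradient_inner_ge:
  fixes F :: "'a::euclidean_space \<Rightarrow> real"
  assumes grad: "\<And>x. GDERIV F x :> G x"
    and sc: "strongly_convex \<beta> F"
    and lip: "L-lipschitz_on UNIV G"
  shows "(norm (G x - G y))\<^sup>2 + \<beta> * L * (norm (x - y))\<^sup>2 \<le> (L + \<beta>) * ((G x - G y) \<bullet> (x - y))"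
proof -
  define h where "h = G x - G y"
  define u where "u = x - y"
  define \<phi> where "\<phi> z = F z - \<beta> / 2 * (norm z)\<^sup>2" for z
  define D where "D z = G z - \<beta> *\<^sub>R z" for z
  have \<phi>_gap: "\<phi> b - \<phi> a - D a \<bullet> (b - a) = F b - F a - G a \<bullet> (b - a) - \<beta> / 2 * (norm (b - a))\<^sup>2" for a b
    unfolding \<phi>_def D_def
    by (simp add: power2_norm_eq_inner inner_diff_left inner_diff_right inner_commute algebra_simps)
  have "e * (\<beta> * (norm u)\<^sup>2 - h \<bullet> u) \<le> (L + \<beta>) * (h \<bullet> u) - ((norm h)\<^sup>2 + \<beta> * L * (norm u)\<^sup>2)"
    if e: "e > 0" for e
  proof -
    define l where "l = L - \<beta> + e"
    have l: "l > 0"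
      using strongly_convex_le_lipschitz[OF grad sc lip] e unfolding l_def by simp
    have "\<phi> a + D a \<bullet> (b - a) \<le> \<phi> b" for a b
      using strongly_convex_lower_bound[OF grad sc, of a b] \<phi>_gap[where a = a and b = b] by simp
    moreover have "\<phi> b \<le> \<phi> a + D a \<bullet> (b - a) + l / 2 * (norm (b - a))\<^sup>2" for a b
    proof -
      have "(L - \<beta>) / 2 * (norm (b - a))\<^sup>2 \<le> l / 2 * (norm (b - a))\<^sup>2"
        unfolding l_def using e by (intro mult_right_mono) auto
      then show ?thesis
        using lipschitz_gradient_upper_bound[OF grad lip, of b a] \<phi>_gap[where a = a and b = b]
        by (simp add: algebra_simps)
    qed
    ultimately have "(norm (D x - D y))\<^sup>2 \<le> l * ((D x - D y) \<bullet> (x - y))"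
      by (rule gradient_cocoercive[OF _ _ l])
    moreover have "D x - D y = h - \<beta> *\<^sub>R u"
      unfolding D_def h_def u_def by (simp add: algebra_simps)
    ultimately have "(norm (h - \<beta> *\<^sub>R u))\<^sup>2 \<le> l * ((h - \<beta> *\<^sub>R u) \<bullet> u)"
      by (simp add: u_def)
    then have "h \<bullet> h - 2 * \<beta> * (h \<bullet> u) + \<beta> * \<beta> * (u \<bullet> u) \<le> l * (h \<bullet> u - \<beta> * (u \<bullet> u))"
      unfolding power2_norm_eq_inner
      by (simp add: inner_diff_left inner_diff_right inner_commute algebra_simps)
    then show ?thesis
      unfolding l_def power2_norm_eq_inner by (simp add: algebra_simps)
  qed
  then have "\<forall>\<^sub>F e in at_right 0. e * (\<beta> * (norm u)\<^sup>2 - h \<bullet> u)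
      \<le> (L + \<beta>) * (h \<bullet> u) - ((norm h)\<^sup>2 + \<beta> * L * (norm u)\<^sup>2)"
    by (intro eventually_mono[OF eventually_at_right_less]) auto
  then have "0 * (\<beta> * (norm u)\<^sup>2 - h \<bullet> u) \<le> (L + \<beta>) * (h \<bullet> u) - ((norm h)\<^sup>2 + \<beta> * L * (norm u)\<^sup>2)"
    by (intro tendsto_le[of "at_right 0" _ _ "\<lambda>e. e * _"] tendsto_intros) auto
  then show ?thesis
    unfolding h_def u_def by simp
qed

lemma step_size_mult_gamma_le_one:
  fixes \<alpha> \<beta> L :: real
  assumes "\<beta> > 0" "L > 0" "\<alpha> \<le> 2 / (L + \<beta>)"
  shows "\<alpha> * (\<beta> * L / (\<beta> + L)) \<le> 1"
proof -
  have "\<beta> * L \<le> (\<beta> + L) / 2 * (\<beta> + L)"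
    using sum_squares_ge_zero[of \<beta> L] by (simp add: algebra_simps)
  then have "\<beta> * L / (\<beta> + L) \<le> (\<beta> + L) / 2"
    using assms by (simp add: pos_divide_le_eq)
  moreover have "\<alpha> \<le> 2 / (\<beta> + L)"
    using assms by (simp add: add.commute)
  ultimately have "\<alpha> * (\<beta> * L / (\<beta> + L)) \<le> 2 / (\<beta> + L) * ((\<beta> + L) / 2)"
    using assms by (intro mult_mono) auto
  also have "\<dots> = 1"
    using assms by simp
  finally show ?thesis .
qed

lemma gradient_step_contraction:
  fixes F :: "'a::euclidean_space \<Rightarrow> real"
  assumes grad: "\<And>x. GDERIV F x :> G x"
    and sc: "strongly_convex \<beta> F"
    and lip: "L-lipschitz_on UNIV G"
    and \<beta>: "\<beta> > 0" and crit: "G w = 0"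
    and \<alpha>: "\<alpha> > 0" "\<alpha> \<le> 2 / (L + \<beta>)"
  shows "norm (x - \<alpha> *\<^sub>R G x - w) \<le> (1 - \<alpha> * (\<beta> * L / (\<beta> + L))) * norm (x - w)"
proof (rule power2_le_imp_le)
  define \<gamma> where "\<gamma> = \<beta> * L / (\<beta> + L)"
  define h where "h = G x"
  define u where "u = x - w"
  have L: "L > 0"
    using strongly_convex_le_lipschitz[OF grad sc lip] \<beta> by simp
  have "h \<bullet> h + \<beta> * L * (u \<bullet> u) \<le> (L + \<beta>) * (h \<bullet> u)"
    using strongly_convex_gradient_inner_ge[OF grad sc lip, of x w] crit
    unfolding h_def u_def by (simp add: power2_norm_eq_inner)
  then have "(h \<bullet> h + \<beta> * L * (u \<bullet> u)) / (L + \<beta>) \<le> h \<bullet> u"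
    using \<beta> L by (simp add: pos_divide_le_eq mult.commute)
  then have hu: "(h \<bullet> h) / (L + \<beta>) + \<gamma> * (u \<bullet> u) \<le> h \<bullet> u"
    unfolding \<gamma>_def by (simp add: add_divide_distrib add.commute)
  have "(norm (x - \<alpha> *\<^sub>R G x - w))\<^sup>2 = (norm (u - \<alpha> *\<^sub>R h))\<^sup>2"
    unfolding h_def u_def by (simp add: algebra_simps)
  also have "\<dots> = u \<bullet> u - 2 * \<alpha> * (h \<bullet> u) + \<alpha>\<^sup>2 * (h \<bullet> h)"
    unfolding power2_norm_eq_inner
    by (simp add: inner_diff_left inner_diff_right inner_commute power2_eq_square algebra_simps)
  also have "\<dots> \<le> (1 - 2 * \<alpha> * \<gamma>) * (u \<bullet> u) + \<alpha> * (\<alpha> - 2 / (L + \<beta>)) * (h \<bullet> h)"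
    using mult_left_mono[OF hu, of "2 * \<alpha>"] \<alpha> \<beta> L by (simp add: field_simps power2_eq_square)
  also have "\<dots> \<le> (1 - 2 * \<alpha> * \<gamma>) * (u \<bullet> u)"
    using \<alpha> by (simp add: mult_nonneg_nonpos mult_nonpos_nonneg)
  also have "\<dots> \<le> (1 - \<alpha> * \<gamma>)\<^sup>2 * (u \<bullet> u)"
    using zero_le_power2[of "\<alpha> * \<gamma>"]
    by (intro mult_right_mono) (auto simp: power2_eq_square algebra_simps)
  also have "\<dots> = ((1 - \<alpha> * \<gamma>) * norm u)\<^sup>2"
    by (simp add: power_mult_distrib power2_norm_eq_inner)
  finally show "(norm (x - \<alpha> *\<^sub>R G x - w))\<^sup>2 \<le> ((1 - \<alpha> * \<gamma>) * norm u)\<^sup>2" .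
  show "0 \<le> (1 - \<alpha> * \<gamma>) * norm u"
    using step_size_mult_gamma_le_one[OF \<beta> L \<alpha>(2)] unfolding \<gamma>_def by simp
qed

lemma gderiv_average:
  assumes "\<And>i. i < n \<Longrightarrow> GDERIV (f i) x :> g i x"
  shows "GDERIV (\<lambda>x. (1 / real n) * (\<Sum>i<n. f i x)) x :> (1 / real n) *\<^sub>R (\<Sum>i<n. g i x)"
proof -
  have "((\<lambda>x. \<Sum>i<n. f i x) has_derivative (\<lambda>h. \<Sum>i<n. h \<bullet> g i x)) (at x)"
    using assms unfolding gderiv_def by (intro has_derivative_sum) auto
  then have "((\<lambda>x. (1 / real n) * (\<Sum>i<n. f i x)) has_derivative (\<lambda>h. (1 / real n) * (\<Sum>i<n. h \<bullet> g i x))) (at x)"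
    by (rule has_derivative_mult_right)
  then show ?thesis
    unfolding gderiv_def by (simp add: inner_sum_right)
qed

lemma lipschitz_on_sum:
  fixes g :: "'i \<Rightarrow> 'a::metric_space \<Rightarrow> 'b::real_normed_vector"
  assumes "finite I" "\<And>i. i \<in> I \<Longrightarrow> (L i)-lipschitz_on U (g i)"
  shows "(\<Sum>i\<in>I. L i)-lipschitz_on U (\<lambda>x. \<Sum>i\<in>I. g i x)"
  using assms by (induction I rule: finite_induct) (auto intro: lipschitz_on_add lipschitz_on_constant)

lemma lipschitz_on_average:
  fixes g :: "nat \<Rightarrow> 'a::metric_space \<Rightarrow> 'b::real_normed_vector"
  assumes "0 < n" "\<And>i. i < n \<Longrightarrow> L-lipschitz_on U (g i)"
  shows "L-lipschitz_on U (\<lambda>x. (1 / real n) *\<^sub>R (\<Sum>i<n. g i x))"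
proof -
  have "((1 / real n) * (\<Sum>i<n. L))-lipschitz_on U (\<lambda>x. (1 / real n) *\<^sub>R (\<Sum>i<n. g i x))"
    using assms(2) by (intro lipschitz_on_cmult_nonneg lipschitz_on_sum) auto
  then show ?thesis
    using assms(1) by simp
qed

lemma gradient_zero_at_minimum:
  fixes F :: "'a::euclidean_space \<Rightarrow> real"
  assumes "GDERIV F w :> G" "\<forall>x. F w \<le> F x"
  shows "G = 0"
proof -
  have "(\<lambda>h. h \<bullet> G) = (\<lambda>h. 0)"
    using assms by (intro differential_zero_maxmin[of w UNIV F]) (auto simp: gderiv_def)
  then have "G \<bullet> G = 0"
    by metis
  then show ?thesis
    by simp
qed

section \<open>Push-sum weights\<close>

locale push_sum_graph =
  fixes n :: nat and E :: "(nat \<times> nat) set"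
  assumes n_pos: "n \<ge> 1"
    and E_sub: "E \<subseteq> {..<n} \<times> {..<n}"
    and E_refl: "\<forall>i<n. (i, i) \<in> E"
    and E_strong: "\<forall>i<n. \<forall>j<n. (i, j) \<in> E\<^sup>*"
begin

lemma out_neighbours_eq: "j < n \<Longrightarrow> {i. (j, i) \<in> E} = {i \<in> {..<n}. (j, i) \<in> E}"
  using E_sub by auto

lemma out_deg_pos:
  assumes "j < n"
  shows "0 < out_deg E j"
proof -
  have "j \<in> {i \<in> {..<n}. (j, i) \<in> E}"
    using assms E_refl by auto
  then show ?thesis
    unfolding out_deg_def out_neighbours_eq[OF assms] by (auto simp: card_gt_0_iff)
qed

lemma out_deg_le: "j < n \<Longrightarrow> out_deg E j \<le> n"
  unfolding out_deg_def out_neighbours_eq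
  using card_mono[of "{..<n}" "{i \<in> {..<n}. (j, i) \<in> E}"] by auto

lemma weight_mat_nonneg: "0 \<le> weight_mat E i j"
  unfolding weight_mat_def by simp

lemma weight_mat_edge_ge: "(j, i) \<in> E \<Longrightarrow> 1 / real n \<le> weight_mat E i j"
  using E_sub out_deg_pos[of j] out_deg_le[of j] by (auto simp: weight_mat_def frac_le)

lemma weight_mat_column_sum:
  assumes "j < n"
  shows "(\<Sum>i<n. weight_mat E i j) = 1"
proof -
  have "(\<Sum>i<n. weight_mat E i j) = (\<Sum>i\<in>{i \<in> {..<n}. (j, i) \<in> E}. 1 / real (out_deg E j))"
    unfolding weight_mat_def by (subst sum.inter_filter) auto
  also have "\<dots> = 1"
    using out_deg_pos[OF assms] E_refl assms by (auto simp: out_deg_def out_neighbours_eq[OF assms])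
  finally show ?thesis .
qed

lemma relpow_refl: "i < n \<Longrightarrow> (i, i) \<in> E ^^ k"
  by (induction k) (auto intro: relpow_Suc_I E_refl[rule_format])

lemma relpow_mono:
  assumes "(j, i) \<in> E ^^ k" "k \<le> K" "i < n"
  shows "(j, i) \<in> E ^^ K"
proof -
  have "(j, i) \<in> E ^^ k O E ^^ (K - k)"
    using assms relpow_refl[of i "K - k"] by auto
  then show ?thesis
    using assms(2) by (metis relpow_add le_add_diff_inverse)
qed

text \<open>Self-loops allow padding walks to a common length.\<close>
lemma uniform_walk_length: "\<exists>K. \<forall>i<n. \<forall>j<n. (j, i) \<in> E ^^ K"
proof -
  have "\<forall>ij\<in>{..<n} \<times> {..<n}. \<exists>k. (snd ij, fst ij) \<in> E ^^ k"
    using E_strong by (auto simp: rtrancl_power)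
  then obtain k where k: "\<forall>ij\<in>{..<n} \<times> {..<n}. (snd ij, fst ij) \<in> E ^^ k ij"
    by metis
  define K where "K = Max (k ` ({..<n} \<times> {..<n}))"
  have "(j, i) \<in> E ^^ K" if "i < n" "j < n" for i j
  proof (rule relpow_mono)
    show "(j, i) \<in> E ^^ k (i, j)"
      using k that by auto
    show "k (i, j) \<le> K"
      unfolding K_def using that by (intro Max_ge) auto
  qed (use that in auto)
  then show ?thesis
    by blast
qed

end

locale push_sum = push_sum_graph +
  fixes y :: "nat \<Rightarrow> nat \<Rightarrow> real"
  assumes y0: "\<forall>i<n. y 0 i = 1"
    and y_step: "\<forall>t. \<forall>i<n. y (Suc t) i = (\<Sum>j<n. weight_mat E i j * y t j)"
begin

definition delta :: real where
  "delta = Sup {1 / y t i | t i. i < n}"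

lemma push_weights_nonneg: "i < n \<Longrightarrow> 0 \<le> y t i"
proof (induction t arbitrary: i)
  case 0
  then show ?case
    using y0 by simp
next
  case (Suc t)
  then show ?case
    using y_step weight_mat_nonneg by (auto intro: sum_nonneg)
qed

lemma push_weights_sum: "(\<Sum>i<n. y t i) = real n"
proof (induction t)
  case 0
  then show ?case
    using y0 by simp
next
  case (Suc t)
  have "(\<Sum>i<n. y (Suc t) i) = (\<Sum>i<n. \<Sum>j<n. weight_mat E i j * y t j)"
    using y_step by simp
  also have "\<dots> = (\<Sum>j<n. (\<Sum>i<n. weight_mat E i j) * y t j)"
    by (subst sum.swap) (simp add: sum_distrib_right)
  finally show ?case
    using Suc weight_mat_column_sum by simp
qed

lemma push_weights_walk_ge:
  "(j, i) \<in> E ^^ k \<Longrightarrow> i < n \<Longrightarrow> j < n \<Longrightarrow> (1 / real n) ^ k * y t j \<le> y (t + k) i"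
proof (induction k arbitrary: i)
  case 0
  then show ?case
    by simp
next
  case (Suc k)
  from Suc.prems(1) obtain m where m: "(j, m) \<in> E ^^ k" "(m, i) \<in> E"
    by (rule relpow_Suc_E)
  have mn: "m < n"
    using m(2) E_sub by auto
  have "(1 / real n) ^ Suc k * y t j = (1 / real n) * ((1 / real n) ^ k * y t j)"
    by simp
  also have "\<dots> \<le> (1 / real n) * y (t + k) m"
    using Suc.IH[OF m(1) mn Suc.prems(3)] by (intro mult_left_mono) auto
  also have "\<dots> \<le> weight_mat E i m * y (t + k) m"
    using weight_mat_edge_ge[OF m(2)] push_weights_nonneg[OF mn] by (intro mult_right_mono)
  also have "\<dots> \<le> (\<Sum>l<n. weight_mat E i l * y (t + k) l)"
    using mn weight_mat_nonneg push_weights_nonneg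
    by (intro member_le_sum[of m "{..<n}" "\<lambda>l. weight_mat E i l * y (t + k) l"]) auto
  finally show ?case
    using y_step Suc.prems(2) by simp
qed

text \<open>After \<open>K\<close> steps every node has received a share \<open>n\<^sup>-\<^sup>K\<close> of the weight of a node whose
  weight is at least the average \<open>1\<close>; before that, of its own initial weight \<open>1\<close>.\<close>
lemma push_weights_lower_bound: "\<exists>c>0. \<forall>t i. i < n \<longrightarrow> c \<le> y t i"
proof -
  obtain K where K: "\<forall>i<n. \<forall>j<n. (j, i) \<in> E ^^ K"
    using uniform_walk_length by blast
  define c where "c = (1 / real n) ^ K"
  have "c \<le> y t i" if i: "i < n" for t i
  proof (cases "K \<le> t")
    case True
    have "\<exists>j<n. 1 \<le> y (t - K) j"
    proof (rule ccontr)
      assume "\<not> ?thesis"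
      then have "(\<Sum>j<n. y (t - K) j) < (\<Sum>j<n. 1)"
        using n_pos by (intro sum_strict_mono) (auto simp: lessThan_empty_iff)
      then show False
        using push_weights_sum by simp
    qed
    then obtain j where j: "j < n" "1 \<le> y (t - K) j"
      by blast
    have "c \<le> (1 / real n) ^ K * y (t - K) j"
      unfolding c_def using j(2) n_pos by (simp add: mult_le_cancel_left1)
    also have "\<dots> \<le> y (t - K + K) i"
      using K i j(1) by (intro push_weights_walk_ge) auto
    finally show ?thesis
      using True by simp
  next
    case False
    have "(1 / real n) ^ t * y 0 i \<le> y (0 + t) i"
      using i by (intro push_weights_walk_ge relpow_refl)
    moreover have "c \<le> (1 / real n) ^ t"
      unfolding c_def using False n_pos by (intro power_decreasing) auto
    ultimately show ?thesis
      using y0 i by simp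
  qed
  moreover have "c > 0"
    unfolding c_def using n_pos by simp
  ultimately show ?thesis
    by blast
qed

lemma push_weights_pos: "i < n \<Longrightarrow> 0 < y t i"
  using push_weights_lower_bound by (meson less_le_trans)

lemma bdd_above_inverse_push_weights: "bdd_above {1 / y t i | t i. i < n}"
proof -
  obtain c where c: "c > 0" "\<forall>t i. i < n \<longrightarrow> c \<le> y t i"
    using push_weights_lower_bound by blast
  show ?thesis
    by (rule bdd_aboveI[of _ "1 / c"]) (use c in \<open>auto simp: frac_le\<close>)
qed

lemma inverse_push_weights_le_delta: "i < n \<Longrightarrow> 1 / y t i \<le> delta"
  unfolding delta_def by (intro cSup_upper[OF _ bdd_above_inverse_push_weights]) auto

lemma delta_ge_one: "1 \<le> delta"
  using inverse_push_weights_le_delta[of 0 0] y0 n_pos by simp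

end

section \<open>Linear recursions\<close>

lemma linear_recurrence_bound:
  fixes e :: "nat \<Rightarrow> real"
  assumes step: "\<And>t. e (Suc t) \<le> r * e t + D" and r: "0 \<le> r" "r < 1" and D: "0 \<le> D"
  shows "e t \<le> r ^ t * e 0 + D / (1 - r)"
proof (induction t)
  case 0
  show ?case
    using r D by simp
next
  case (Suc t)
  have "e (Suc t) \<le> r * (r ^ t * e 0 + D / (1 - r)) + D"
    using step[of t] mult_left_mono[OF Suc r(1)] by simp
  also have "\<dots> = r ^ Suc t * e 0 + D / (1 - r)"
    using r by (simp add: field_simps)
  finally show ?case .
qed

lemma mult_geometric_step:
  fixes q r :: real
  assumes "0 \<le> q" "0 \<le> r"
  shows "q * (real t * (max q r) ^ (t - 1)) + r ^ t \<le> real (Suc t) * (max q r) ^ t"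
proof -
  have "q * (real t * (max q r) ^ (t - 1)) \<le> real t * (max q r) ^ t"
  proof (cases t)
    case (Suc k)
    have "q * (real t * (max q r) ^ (t - 1)) = real t * (q * (max q r) ^ k)"
      using Suc by simp
    also have "\<dots> \<le> real t * (max q r * (max q r) ^ k)"
      using assms by (intro mult_left_mono mult_right_mono) auto
    finally show ?thesis
      using Suc by simp
  qed simp
  moreover have "r ^ t \<le> (max q r) ^ t"
    using assms by (intro power_mono) auto
  ultimately show ?thesis
    by (simp add: algebra_simps)
qed

lemma driven_recurrence_bound:
  fixes a e :: "nat \<Rightarrow> real"
  assumes step: "\<And>t. a (Suc t) \<le> q * a t + K * (e t + s ^ t * C)"
    and e_bound: "\<And>t. e t \<le> r ^ t * e0 + B"
    and q: "0 \<le> q" "q < 1" and nonneg: "0 \<le> r" "0 \<le> s" "0 \<le> K" "0 \<le> C" "0 \<le> e0" "0 \<le> B"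
  shows "a t \<le> q ^ t * a 0 + K * e0 * real t * (max q r) ^ (t - 1)
                + K * C * real t * (max q s) ^ (t - 1) + K * B / (1 - q)"
proof (induction t)
  case 0
  show ?case
    using q nonneg by simp
next
  case (Suc t)
  let ?m1 = "max q r" and ?m2 = "max q s"
  have "a (Suc t) \<le> q * (q ^ t * a 0 + K * e0 * real t * ?m1 ^ (t - 1)
                + K * C * real t * ?m2 ^ (t - 1) + K * B / (1 - q)) + K * (r ^ t * e0 + B + s ^ t * C)"
  proof -
    have "K * (e t + s ^ t * C) \<le> K * (r ^ t * e0 + B + s ^ t * C)"
      using e_bound[of t] nonneg(3) by (intro mult_left_mono) auto
    then show ?thesis
      using step[of t] mult_left_mono[OF Suc q(1)] by linarith
  qed
  also have "\<dots> = q ^ Suc t * a 0 + K * e0 * (q * (real t * ?m1 ^ (t - 1)) + r ^ t)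
                + K * C * (q * (real t * ?m2 ^ (t - 1)) + s ^ t) + K * B / (1 - q)"
    using q by (simp add: field_simps)
  also have "\<dots> \<le> q ^ Suc t * a 0 + K * e0 * (real (Suc t) * ?m1 ^ t)
                + K * C * (real (Suc t) * ?m2 ^ t) + K * B / (1 - q)"
    using mult_geometric_step[OF q(1), of r t] mult_geometric_step[OF q(1), of s t] nonneg
    by (intro add_mono mult_left_mono order_refl) auto
  finally show ?case
    by (simp add: mult.assoc)
qed

section \<open>The gradient-push iteration\<close>

locale gradient_push = push_sum n E y + prob_weights n p
  for n :: nat and E :: "(nat \<times> nat) set" and y :: "nat \<Rightarrow> nat \<Rightarrow> real" and p :: "nat \<Rightarrow> real" +
  fixes g :: "nat \<Rightarrow> 'a::euclidean_space \<Rightarrow> 'a" and \<alpha> :: real and w :: "nat \<Rightarrow> nat \<Rightarrow> 'a"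
  assumes p_fix: "mat_vec n (weight_mat E) p = p"
    and alpha_pos: "\<alpha> > 0"
    and w_step: "\<forall>t. \<forall>i<n. w (Suc t) i =
        (\<Sum>j<n. weight_mat E i j *\<^sub>R (w t j - \<alpha> *\<^sub>R g j ((1 / y t j) *\<^sub>R w t j)))"
begin

definition w_avg :: "nat \<Rightarrow> 'a" where
  "w_avg t = (1 / real n) *\<^sub>R (\<Sum>i<n. w t i)"

definition avg_grad :: "'a \<Rightarrow> 'a" where
  "avg_grad x = (1 / real n) *\<^sub>R (\<Sum>i<n. g i x)"

definition push_ratio :: "nat \<Rightarrow> nat \<Rightarrow> 'a" where
  "push_ratio t j = (1 / y t j) *\<^sub>R w t j"

definition consensus_error :: "nat \<Rightarrow> real" where
  "consensus_error t = pi_block_norm n p (\<lambda>i. w t i - (real n * p i) *\<^sub>R w_avg t)"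

definition sigma :: real where
  "sigma = pi_op_norm n p (\<lambda>i j. weight_mat E i j - p i)"

definition ones_dev :: real where
  "ones_dev = pi_norm n p (\<lambda>i. 1 - real n * p i)"

lemma weight_mat_stationary: "i < n \<Longrightarrow> (\<Sum>j<n. weight_mat E i j * p j) = p i"
  using fun_cong[OF p_fix, of i] by (simp add: mat_vec_def)

lemma sigma_nonneg: "0 \<le> sigma"
  unfolding sigma_def by (rule pi_op_norm_nonneg)

lemma push_weights_deviation_le: "pi_norm n p (\<lambda>i. y t i - real n * p i) \<le> sigma ^ t * ones_dev"
proof (induction t)
  case 0
  have "pi_norm n p (\<lambda>i. y 0 i - real n * p i) = ones_dev"
    unfolding ones_dev_def using y0 by (intro pi_norm_cong) auto
  then show ?case
    by simp
next
  case (Suc t)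
  let ?A = "\<lambda>i j. weight_mat E i j - p i"
  have "y (Suc t) i - real n * p i = mat_vec n ?A (\<lambda>j. y t j - real n * p j) i" if "i < n" for i
    using centered_mix_eq[of "weight_mat E" i "y t" "real n"] weight_mat_stationary[OF that]
      y_step push_weights_sum that
    by (simp add: mat_vec_def mult.commute)
  then have "pi_norm n p (\<lambda>i. y (Suc t) i - real n * p i)
      = pi_norm n p (mat_vec n ?A (\<lambda>j. y t j - real n * p j))"
    by (intro pi_norm_cong) auto
  also have "\<dots> \<le> sigma * pi_norm n p (\<lambda>j. y t j - real n * p j)"
    unfolding sigma_def by (rule pi_norm_mat_vec_le)
  also have "\<dots> \<le> sigma * (sigma ^ t * ones_dev)"
    using Suc sigma_nonneg by (intro mult_left_mono)
  finally show ?case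
    by simp
qed

lemma sum_w_Suc: "(\<Sum>i<n. w (Suc t) i) = (\<Sum>j<n. w t j - \<alpha> *\<^sub>R g j (push_ratio t j))"
proof -
  have "(\<Sum>i<n. w (Suc t) i)
      = (\<Sum>i<n. \<Sum>j<n. weight_mat E i j *\<^sub>R (w t j - \<alpha> *\<^sub>R g j (push_ratio t j)))"
    using w_step unfolding push_ratio_def by simp
  also have "\<dots> = (\<Sum>j<n. (\<Sum>i<n. weight_mat E i j) *\<^sub>R (w t j - \<alpha> *\<^sub>R g j (push_ratio t j)))"
    by (subst sum.swap) (simp add: scaleR_sum_left)
  finally show ?thesis
    by (simp add: weight_mat_column_sum)
qed

lemma w_avg_Suc: "w_avg (Suc t) = w_avg t - (\<alpha> / real n) *\<^sub>R (\<Sum>j<n. g j (push_ratio t j))"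
  unfolding w_avg_def sum_w_Suc by (simp add: sum_subtractf scaleR_sum_right scaleR_diff_right)

lemma consensus_error_Suc_le:
  "consensus_error (Suc t) \<le> sigma * (consensus_error t + \<alpha> * pi_block_norm n p (\<lambda>j. g j (push_ratio t j)))"
proof -
  let ?A = "\<lambda>i j. weight_mat E i j - p i"
  let ?x = "\<lambda>j. w t j - \<alpha> *\<^sub>R g j (push_ratio t j)"
  let ?v = "\<lambda>j. (w t j - (real n * p j) *\<^sub>R w_avg t) - \<alpha> *\<^sub>R g j (push_ratio t j)"
  have avg: "real n *\<^sub>R w_avg (Suc t) = (\<Sum>j<n. ?x j)"
    using n_pos unfolding w_avg_def sum_w_Suc by simp
  have "w (Suc t) i - (real n * p i) *\<^sub>R w_avg (Suc t) = (\<Sum>j<n. ?A i j *\<^sub>R ?v j)" if "i < n" for i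
  proof -
    have "w (Suc t) i - (real n * p i) *\<^sub>R w_avg (Suc t)
        = (\<Sum>j<n. weight_mat E i j *\<^sub>R ?x j) - p i *\<^sub>R (\<Sum>j<n. ?x j)"
      using w_step that scaleR_scaleR[of "p i" "real n" "w_avg (Suc t)"]
      unfolding avg push_ratio_def by (simp add: mult.commute)
    also have "\<dots> = (\<Sum>j<n. ?A i j *\<^sub>R (?x j - p j *\<^sub>R (real n *\<^sub>R w_avg t)))"
      by (rule centered_mix_eq[symmetric]) (rule weight_mat_stationary[OF that])
    also have "\<dots> = (\<Sum>j<n. ?A i j *\<^sub>R ?v j)"
      by (simp add: algebra_simps)
    finally show ?thesis .
  qed
  then have "consensus_error (Suc t) = pi_block_norm n p (\<lambda>i. \<Sum>j<n. ?A i j *\<^sub>R ?v j)"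
    unfolding consensus_error_def pi_block_norm_eq_pi_norm by (intro pi_norm_cong) auto
  also have "\<dots> \<le> sigma * pi_block_norm n p ?v"
    unfolding sigma_def by (rule pi_block_norm_mat_le)
  also have "\<dots> \<le> sigma * (consensus_error t + \<alpha> * pi_block_norm n p (\<lambda>j. g j (push_ratio t j)))"
  proof (rule mult_left_mono[OF _ sigma_nonneg])
    show "pi_block_norm n p ?v \<le> consensus_error t + \<alpha> * pi_block_norm n p (\<lambda>j. g j (push_ratio t j))"
      using pi_block_norm_triangle[of "\<lambda>j. w t j - (real n * p j) *\<^sub>R w_avg t" "\<lambda>j. (- \<alpha>) *\<^sub>R g j (push_ratio t j)"]
        pi_block_norm_scaleR[of "- \<alpha>" "\<lambda>j. g j (push_ratio t j)"] alpha_pos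
      unfolding consensus_error_def by simp
  qed
  finally show ?thesis .
qed

lemma push_ratio_deviation_le:
  assumes "j < n"
  shows "norm (push_ratio t j - w_avg t)
    \<le> delta * (norm (w t j - (real n * p j) *\<^sub>R w_avg t) + \<bar>y t j - real n * p j\<bar> * norm (w_avg t))"
proof -
  let ?a = "w t j - (real n * p j) *\<^sub>R w_avg t" and ?b = "(y t j - real n * p j) *\<^sub>R w_avg t"
  have y: "0 < y t j" "1 / y t j \<le> delta"
    using assms push_weights_pos inverse_push_weights_le_delta by auto
  have "push_ratio t j - w_avg t = (1 / y t j) *\<^sub>R (?a - ?b)"
    unfolding push_ratio_def using y by (simp add: algebra_simps)
  then have "norm (push_ratio t j - w_avg t) = (1 / y t j) * norm (?a - ?b)"
    using y by simp
  also have "\<dots> \<le> (1 / y t j) * (norm ?a + \<bar>y t j - real n * p j\<bar> * norm (w_avg t))"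
    using norm_triangle_ineq4[of ?a ?b] y by (intro mult_left_mono) auto
  also have "\<dots> \<le> delta * (norm ?a + \<bar>y t j - real n * p j\<bar> * norm (w_avg t))"
    using y by (intro mult_right_mono) auto
  finally show ?thesis .
qed

end

locale gradient_push_bounded = gradient_push n E y p g \<alpha> w
  for n E y p and g :: "nat \<Rightarrow> 'a::euclidean_space \<Rightarrow> 'a" and \<alpha> w +
  fixes L :: real and wstar :: 'a and R :: real
  assumes lipschitz: "\<forall>j<n. L-lipschitz_on UNIV (g j)"
    and R_bound: "\<forall>t. norm (w_avg t - wstar) \<le> R"
    and stable: "sigma * (1 + \<alpha> * L * delta) < 1"
begin

definition rho :: real where
  "rho = sigma * (1 + \<alpha> * L * delta)"

definition Rbar :: real where
  "Rbar = L * (delta * ones_dev + sqrt (\<Sum>j<n. 1 / p j)) * R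
    + (L * delta * ones_dev * norm wstar + pi_block_norm n p (\<lambda>i. g i wstar))"

lemma L_nonneg: "0 \<le> L"
  using lipschitz n_pos lipschitz_on_nonneg by auto

lemma R_nonneg: "0 \<le> R"
  using R_bound norm_ge_zero order_trans by blast

lemma rho_nonneg: "0 \<le> rho"
  unfolding rho_def using sigma_nonneg alpha_pos L_nonneg delta_ge_one by simp

lemma rho_lt_one: "rho < 1"
  unfolding rho_def by (rule stable)

lemma sigma_le_rho: "sigma \<le> rho"
  unfolding rho_def using sigma_nonneg alpha_pos L_nonneg delta_ge_one
  by (simp add: mult_le_cancel_left1)

lemma sigma_lt_one: "sigma < 1"
  using sigma_le_rho rho_lt_one by simp

lemma ones_dev_nonneg: "0 \<le> ones_dev"
  unfolding ones_dev_def by (rule pi_norm_nonneg)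

lemma Rbar_nonneg: "0 \<le> Rbar"
proof -
  have "0 \<le> sqrt (\<Sum>j<n. 1 / p j)"
    using weights_pos by (intro real_sqrt_ge_zero sum_nonneg) auto
  then show ?thesis
    unfolding Rbar_def using L_nonneg R_nonneg delta_ge_one ones_dev_nonneg pi_block_norm_nonneg
    by (intro add_nonneg_nonneg mult_nonneg_nonneg) auto
qed

lemma push_ratio_deviation_bound:
  assumes "j < n"
  shows "norm (push_ratio t j - w_avg t)
    \<le> delta * (norm (w t j - (real n * p j) *\<^sub>R w_avg t) + (norm wstar + R) * \<bar>y t j - real n * p j\<bar>)"
proof -
  have "norm (w_avg t) \<le> norm wstar + R"
    using R_bound[rule_format, of t] norm_triangle_sub[of "w_avg t" wstar] by linarith
  then have "\<bar>y t j - real n * p j\<bar> * norm (w_avg t) \<le> (norm wstar + R) * \<bar>y t j - real n * p j\<bar>"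
    by (subst mult.commute) (rule mult_right_mono, auto)
  then have "delta * (norm (w t j - (real n * p j) *\<^sub>R w_avg t) + \<bar>y t j - real n * p j\<bar> * norm (w_avg t))
      \<le> delta * (norm (w t j - (real n * p j) *\<^sub>R w_avg t) + (norm wstar + R) * \<bar>y t j - real n * p j\<bar>)"
    using delta_ge_one by (intro mult_left_mono add_left_mono) auto
  then show ?thesis
    using push_ratio_deviation_le[OF assms, of t] by linarith
qed

lemma gradient_norm_le:
  assumes j: "j < n"
  shows "norm (g j (push_ratio t j)) \<le> L * delta * norm (w t j - (real n * p j) *\<^sub>R w_avg t)
    + L * delta * (norm wstar + R) * \<bar>y t j - real n * p j\<bar> + L * R + norm (g j wstar)"
proof -
  have "norm (g j (push_ratio t j)) \<le> L * norm (push_ratio t j - wstar) + norm (g j wstar)"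
    using lipschitz_on_normD[of L UNIV "g j" "push_ratio t j" wstar] lipschitz j
      norm_triangle_ineq2[of "g j (push_ratio t j)" "g j wstar"] by auto
  moreover have "norm (push_ratio t j - wstar) \<le> delta * (norm (w t j - (real n * p j) *\<^sub>R w_avg t)
      + (norm wstar + R) * \<bar>y t j - real n * p j\<bar>) + R"
    using push_ratio_deviation_bound[OF j, of t] R_bound[rule_format, of t]
      norm_triangle_ineq[of "push_ratio t j - w_avg t" "w_avg t - wstar"] by simp
  then have "L * norm (push_ratio t j - wstar) \<le> L * (delta * (norm (w t j - (real n * p j) *\<^sub>R w_avg t)
      + (norm wstar + R) * \<bar>y t j - real n * p j\<bar>) + R)"
    using L_nonneg by (rule mult_left_mono)
  ultimately show ?thesis
    by (simp add: algebra_simps)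
qed

lemma gradient_block_norm_le:
  "pi_block_norm n p (\<lambda>j. g j (push_ratio t j)) \<le> L * delta * consensus_error t + Rbar"
proof -
  let ?A = "\<lambda>j. norm (w t j - (real n * p j) *\<^sub>R w_avg t)"
  let ?B = "\<lambda>j. \<bar>y t j - real n * p j\<bar>"
  let ?M = "norm wstar + R"
  have "norm (g j (push_ratio t j)) \<le> L * delta * ?A j + L * delta * ?M * ?B j + L * R + norm (g j wstar)"
    if "j < n" for j
    using gradient_norm_le[OF that] .
  then have "pi_block_norm n p (\<lambda>j. g j (push_ratio t j))
      \<le> pi_norm n p (\<lambda>j. L * delta * ?A j + L * delta * ?M * ?B j + L * R + norm (g j wstar))"
    unfolding pi_block_norm_eq_pi_norm by (intro pi_norm_mono) auto
  also have "\<dots> \<le> pi_norm n p (\<lambda>j. L * delta * ?A j) + pi_norm n p (\<lambda>j. L * delta * ?M * ?B j)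
      + pi_norm n p (\<lambda>j. L * R) + pi_norm n p (\<lambda>j. norm (g j wstar))"
    using pi_norm_triangle[of "\<lambda>j. L * delta * ?A j + L * delta * ?M * ?B j + L * R" "\<lambda>j. norm (g j wstar)"]
      pi_norm_triangle[of "\<lambda>j. L * delta * ?A j + L * delta * ?M * ?B j" "\<lambda>j. L * R"]
      pi_norm_triangle[of "\<lambda>j. L * delta * ?A j" "\<lambda>j. L * delta * ?M * ?B j"]
    by linarith
  also have "\<dots> \<le> L * delta * consensus_error t + L * delta * ?M * ones_dev
      + L * R * sqrt (\<Sum>j<n. 1 / p j) + pi_block_norm n p (\<lambda>j. g j wstar)"
  proof -
    have "sigma ^ t * ones_dev \<le> ones_dev"
      using sigma_nonneg sigma_lt_one ones_dev_nonneg by (intro mult_left_le_one_le power_le_one) auto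
    then have "pi_norm n p (\<lambda>j. y t j - real n * p j) \<le> ones_dev"
      using push_weights_deviation_le[of t] by linarith
    then have "pi_norm n p (\<lambda>j. L * delta * ?M * ?B j) \<le> L * delta * ?M * ones_dev"
      using L_nonneg R_nonneg delta_ge_one by (simp add: pi_norm_scale pi_norm_abs mult_left_mono)
    moreover have "pi_norm n p (\<lambda>j. L * delta * ?A j) = L * delta * consensus_error t"
      using L_nonneg delta_ge_one
      by (simp add: pi_norm_scale consensus_error_def pi_block_norm_eq_pi_norm)
    moreover have "pi_norm n p (\<lambda>j. L * R) = L * R * sqrt (\<Sum>j<n. 1 / p j)"
      using pi_norm_scale[of "L * R" "\<lambda>j. 1"] L_nonneg R_nonneg by (simp add: pi_norm_const_one)
    ultimately show ?thesis
      by (simp add: pi_block_norm_eq_pi_norm)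
  qed
  also have "\<dots> = L * delta * consensus_error t + Rbar"
    unfolding Rbar_def by (simp add: algebra_simps)
  finally show ?thesis .
qed

lemma consensus_error_bound:
  "consensus_error t \<le> rho ^ t * consensus_error 0 + \<alpha> * sigma * Rbar / (1 - rho)"
proof (rule linear_recurrence_bound[OF _ rho_nonneg rho_lt_one])
  fix t
  have "\<alpha> * pi_block_norm n p (\<lambda>j. g j (push_ratio t j)) \<le> \<alpha> * (L * delta * consensus_error t + Rbar)"
    using gradient_block_norm_le[of t] alpha_pos by (intro mult_left_mono) auto
  then have "consensus_error (Suc t) \<le> sigma * (consensus_error t + \<alpha> * (L * delta * consensus_error t + Rbar))"
    using consensus_error_Suc_le[of t] sigma_nonneg by (meson add_left_mono mult_left_mono order_trans)
  then show "consensus_error (Suc t) \<le> rho * consensus_error t + \<alpha> * sigma * Rbar"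
    unfolding rho_def by (simp add: algebra_simps)
  show "0 \<le> \<alpha> * sigma * Rbar"
    using alpha_pos sigma_nonneg Rbar_nonneg by simp
qed

lemma gradient_average_error_le:
  "norm (\<Sum>j<n. g j (w_avg t) - g j (push_ratio t j))
    \<le> L * delta * (consensus_error t + sigma ^ t * (ones_dev * (norm wstar + R)))"
proof -
  let ?A = "\<lambda>j. norm (w t j - (real n * p j) *\<^sub>R w_avg t)"
  let ?B = "\<lambda>j. \<bar>y t j - real n * p j\<bar>"
  let ?M = "norm wstar + R"
  have "norm (\<Sum>j<n. g j (w_avg t) - g j (push_ratio t j)) \<le> (\<Sum>j<n. L * (delta * (?A j + ?M * ?B j)))"
  proof (rule order_trans[OF norm_sum sum_mono])
    fix j assume j: "j \<in> {..<n}"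
    then have "norm (g j (w_avg t) - g j (push_ratio t j)) \<le> L * norm (push_ratio t j - w_avg t)"
      using lipschitz lipschitz_on_normD[of L UNIV "g j" "w_avg t" "push_ratio t j"]
      by (simp add: norm_minus_commute)
    also have "\<dots> \<le> L * (delta * (?A j + ?M * ?B j))"
      using push_ratio_deviation_bound j L_nonneg by (intro mult_left_mono) auto
    finally show "norm (g j (w_avg t) - g j (push_ratio t j)) \<le> L * (delta * (?A j + ?M * ?B j))" .
  qed
  also have "\<dots> = L * delta * ((\<Sum>j<n. ?A j) + ?M * (\<Sum>j<n. ?B j))"
    by (simp add: sum.distrib sum_distrib_left algebra_simps)
  also have "\<dots> \<le> L * delta * (consensus_error t + ?M * (sigma ^ t * ones_dev))"
  proof -
    have "(\<Sum>j<n. ?A j) \<le> consensus_error t"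
      using sum_abs_le_pi_norm[of ?A] unfolding consensus_error_def pi_block_norm_eq_pi_norm by simp
    moreover have "(\<Sum>j<n. ?B j) \<le> sigma ^ t * ones_dev"
      using sum_abs_le_pi_norm[of "\<lambda>j. y t j - real n * p j"] push_weights_deviation_le[of t] by simp
    ultimately show ?thesis
      using L_nonneg delta_ge_one R_nonneg by (intro mult_left_mono add_mono) auto
  qed
  finally show ?thesis
    by (simp add: algebra_simps)
qed

lemma w_avg_Suc_le:
  assumes contraction: "\<And>x. norm (x - \<alpha> *\<^sub>R avg_grad x - wstar) \<le> q * norm (x - wstar)"
  shows "norm (w_avg (Suc t) - wstar) \<le> q * norm (w_avg t - wstar)
    + \<alpha> * L * delta / real n * (consensus_error t + sigma ^ t * (ones_dev * (norm wstar + R)))"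
proof -
  let ?V = "\<Sum>j<n. g j (w_avg t) - g j (push_ratio t j)"
  have split: "w_avg (Suc t) - wstar = (w_avg t - \<alpha> *\<^sub>R avg_grad (w_avg t) - wstar) + (\<alpha> / real n) *\<^sub>R ?V"
    unfolding w_avg_Suc avg_grad_def by (simp add: sum_subtractf scaleR_diff_right algebra_simps)
  have "norm (w_avg (Suc t) - wstar) \<le> q * norm (w_avg t - wstar) + \<alpha> / real n * norm ?V"
    using norm_triangle_ineq[of "w_avg t - \<alpha> *\<^sub>R avg_grad (w_avg t) - wstar" "(\<alpha> / real n) *\<^sub>R ?V"]
      contraction[of "w_avg t"] alpha_pos
    unfolding split by simp
  also have "\<alpha> / real n * norm ?V
      \<le> \<alpha> / real n * (L * delta * (consensus_error t + sigma ^ t * (ones_dev * (norm wstar + R))))"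
    using gradient_average_error_le alpha_pos by (intro mult_left_mono) auto
  finally show ?thesis
    by (simp add: algebra_simps)
qed

lemma w_avg_bound:
  assumes contraction: "\<And>x. norm (x - \<alpha> *\<^sub>R avg_grad x - wstar) \<le> (1 - \<gamma> * \<alpha>) * norm (x - wstar)"
    and \<gamma>: "0 < \<gamma> * \<alpha>" "\<gamma> * \<alpha> \<le> 1"
  shows "norm (w_avg t - wstar) \<le> (1 - \<gamma> * \<alpha>) ^ t * norm (w_avg 0 - wstar)
    + \<alpha> * L * delta / real n * consensus_error 0 * real t * (max (1 - \<gamma> * \<alpha>) rho) ^ (t - 1)
    + \<alpha> * L * delta / real n * ones_dev * (norm wstar + R) * real t * (max (1 - \<gamma> * \<alpha>) sigma) ^ (t - 1)
    + \<alpha> * L * delta / (real n * \<gamma>) * (sigma * Rbar / (1 - rho))"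
proof -
  have "\<alpha> * L * delta / real n * (\<alpha> * X) / (1 - (1 - \<gamma> * \<alpha>))
      = \<alpha> * L * delta / (real n * \<gamma>) * X" for X
    using alpha_pos \<gamma> n_pos by (auto simp: field_simps)
  then have "\<alpha> * L * delta / real n * (\<alpha> * sigma * Rbar / (1 - rho)) / (1 - (1 - \<gamma> * \<alpha>))
      = \<alpha> * L * delta / (real n * \<gamma>) * (sigma * Rbar / (1 - rho))"
    by (metis times_divide_eq_right mult.assoc)
  moreover have "norm (w_avg t - wstar) \<le> (1 - \<gamma> * \<alpha>) ^ t * norm (w_avg 0 - wstar)
    + \<alpha> * L * delta / real n * consensus_error 0 * real t * (max (1 - \<gamma> * \<alpha>) rho) ^ (t - 1)
    + \<alpha> * L * delta / real n * (ones_dev * (norm wstar + R)) * real t * (max (1 - \<gamma> * \<alpha>) sigma) ^ (t - 1)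
    + \<alpha> * L * delta / real n * (\<alpha> * sigma * Rbar / (1 - rho)) / (1 - (1 - \<gamma> * \<alpha>))"
    using w_avg_Suc_le[OF contraction] consensus_error_bound \<gamma> alpha_pos L_nonneg delta_ge_one n_pos
      sigma_nonneg rho_nonneg rho_lt_one ones_dev_nonneg R_nonneg Rbar_nonneg
      consensus_error_def pi_block_norm_nonneg
    by (intro driven_recurrence_bound) auto
  ultimately show ?thesis
    by (simp add: mult.assoc)
qed

end

theorem theorem4p3:
  fixes n :: nat and E :: "(nat \<times> nat) set" and p :: "nat \<Rightarrow> real"
    and f :: "nat \<Rightarrow> 'a::euclidean_space \<Rightarrow> real" and g :: "nat \<Rightarrow> 'a \<Rightarrow> 'a"
    and Li :: "nat \<Rightarrow> real" and L \<beta> \<alpha> R :: real and wstar :: 'a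
    and w :: "nat \<Rightarrow> nat \<Rightarrow> 'a" and y :: "nat \<Rightarrow> nat \<Rightarrow> real"
  defines "\<sigma> \<equiv> pi_op_norm n p (\<lambda>i j. weight_mat E i j - p i)"
    and "F \<equiv> (\<lambda>x. (1 / real n) * (\<Sum>i<n. f i x))"
    and "\<gamma> \<equiv> \<beta> * L / (\<beta> + L)"
    and "wbar \<equiv> (\<lambda>t. (1 / real n) *\<^sub>R (\<Sum>i<n. w t i))"
    and "\<delta> \<equiv> Sup {1 / y t i | t i. i < n}"
  assumes n_pos: "n \<ge> 1"
    and E_sub: "E \<subseteq> {..<n} \<times> {..<n}"
    and E_refl: "\<forall>i<n. (i, i) \<in> E"
    and E_strong: "\<forall>i<n. \<forall>j<n. (i, j) \<in> E\<^sup>*"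
    and p_fix: "mat_vec n (weight_mat E) p = p" and p_pos: "\<forall>i<n. p i > 0" and p_sum: "(\<Sum>i<n. p i) = 1"
    and grad: "\<forall>i<n. \<forall>x. GDERIV (f i) x :> g i x"
    and F1: "\<forall>i<n. Li i > 0 \<and> (Li i)-lipschitz_on UNIV (g i)"
    and L_def: "L = Max (Li ` {..<n})"
    and F2: "\<beta> > 0" "strongly_convex \<beta> F"
    and wstar_min: "\<forall>x. F wstar \<le> F x"
    and alpha_pos: "\<alpha> > 0"
    and y0: "\<forall>i<n. y 0 i = 1"
    and w_step: "\<forall>t. \<forall>i<n. w (Suc t) i =
        (\<Sum>j<n. weight_mat E i j *\<^sub>R (w t j - \<alpha> *\<^sub>R g j ((1 / y t j) *\<^sub>R w t j)))"
    and y_step: "\<forall>t. \<forall>i<n. y (Suc t) i = (\<Sum>j<n. weight_mat E i j * y t j)"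
    and alpha_le: "\<alpha> \<le> 2 / (L + \<beta>)"
    and rho_lt: "\<sigma> * (1 + \<alpha> * L * \<delta>) < 1"
    and R_pos: "R > 0"
    and R_bound: "\<forall>t. norm (wbar t - wstar) \<le> R"
  shows "let \<rho> = \<sigma> * (1 + \<alpha> * L * \<delta>);
             c = pi_norm n p (\<lambda>i. 1 - real n * p i);
             D1 = \<delta> * c + sqrt (\<Sum>j<n. 1 / p j);
             D2 = L * \<delta> * c * norm wstar + pi_block_norm n p (\<lambda>i. g i wstar);
             Rb = L * D1 * R + D2;
             e = (\<lambda>t. pi_block_norm n p (\<lambda>i. w t i - (real n * p i) *\<^sub>R wbar t))
         in \<forall>t::nat.
            e t \<le> \<rho> ^ t * e 0 + \<alpha> * \<sigma> * Rb / (1 - \<rho>)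
          \<and> norm (wbar t - wstar) \<le>
              (1 - \<gamma> * \<alpha>) ^ t * norm (wbar 0 - wstar)
              + \<alpha> * L * \<delta> / real n * e 0 * real t * (max (1 - \<gamma> * \<alpha>) \<rho>) ^ (t - 1)
              + \<alpha> * L * \<delta> / real n * c * (norm wstar + R) * real t * (max (1 - \<gamma> * \<alpha>) \<sigma>) ^ (t - 1)
              + \<alpha> * L * \<delta> / (real n * \<gamma>) * (\<sigma> * Rb / (1 - \<rho>))"
proof -
  interpret gradient_push n E y p g \<alpha> w
    using n_pos E_sub E_refl E_strong y0 y_step p_pos p_sum p_fix alpha_pos w_step
    by unfold_locales auto
  have wbar_eq: "wbar = w_avg" and \<sigma>_eq: "\<sigma> = sigma" and \<delta>_eq: "\<delta> = delta"
    unfolding wbar_def w_avg_def \<sigma>_def sigma_def \<delta>_def delta_def by (rule refl)+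
  have lipschitz: "\<forall>j<n. L-lipschitz_on UNIV (g j)"
    using F1 unfolding L_def by (auto intro: lipschitz_on_mono Max_ge)
  interpret gradient_push_bounded n E y p g \<alpha> w L wstar R
    using lipschitz R_bound rho_lt unfolding wbar_eq \<sigma>_eq \<delta>_eq by unfold_locales auto
  have grad_F: "GDERIV F x :> avg_grad x" for x
    unfolding F_def avg_grad_def using grad by (intro gderiv_average) auto
  have lip_F: "L-lipschitz_on UNIV avg_grad"
    unfolding avg_grad_def using lipschitz n_pos by (intro lipschitz_on_average) auto
  have "L > 0"
    using strongly_convex_le_lipschitz[OF grad_F F2(2) lip_F] F2(1) by simp
  have "avg_grad wstar = 0"
    using grad_F wstar_min by (rule gradient_zero_at_minimum)
  then have contraction: "norm (x - \<alpha> *\<^sub>R avg_grad x - wstar) \<le> (1 - \<gamma> * \<alpha>) * norm (x - wstar)" for x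
    using gradient_step_contraction[OF grad_F F2(2) lip_F F2(1) _ alpha_pos alpha_le]
    unfolding \<gamma>_def by (simp add: mult.commute)
  have "0 < \<gamma> * \<alpha>" "\<gamma> * \<alpha> \<le> 1"
    using F2(1) \<open>L > 0\<close> alpha_pos step_size_mult_gamma_le_one[OF F2(1) \<open>L > 0\<close> alpha_le]
    unfolding \<gamma>_def by (simp_all add: mult.commute)
  note w_avg_bound = w_avg_bound[OF contraction this]
  show ?thesis
    unfolding Let_def \<sigma>_eq \<delta>_eq wbar_eq ones_dev_def[symmetric] Rbar_def[symmetric] rho_def[symmetric]
    using consensus_error_bound w_avg_bound unfolding consensus_error_def by blast
qed

end
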